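(* Let $\mathcal D=\{\phi_j\}_{j=1}^\infty$ be a dictionary in a Banach space $\mathbb X$. Assume that either (i) there is $k_1>0$ such that $\Sigma_1(\mathcal D)$ satisfies $A_1(k_1,D)$ for every $D<\infty$, or (ii) there is a positive increasing sequence $H$ such that $\Sigma_1(\mathcal D)$ satisfies $A_3(H,D)$ for every $D<\infty$. Then there exist $\{\phi_j^*\}_{j\ge1}\subset\mathbb X^*$ such that $\phi_j^*(\phi_i)=0$ for $i\ne j$ and $\phi_j^*(\phi_j)=1$.
   Context: A dictionary is a family of nonzero vectors whose closed linear span is $\mathbb X$. Property $A_1(k_N,D)$ of $\Sigma_N$: $\|\sum_{j\in A}a_j\phi_j\|\le k_N\|\sum_{j\in B}a_j\phi_j\|$ for all scalars $a_j$ and all finite index sets $A\subset B$ with $|A|\le N$, $|B|<D$. Property $A_3(H,D)$ of $\Sigma_N$: $\sum_{j\in A}|a_j|\le H(|A|)\|\sum_{j\in B}a_j\phi_j\|$ for all scalars $a_j$ and all finite $A\subset B$ with $|A|\le N$, $|B|<D$. *)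

theory Defs
  imports "HOL-Analysis.Analysis"
begin

definition dictionary :: "(nat \<Rightarrow> 'a::real_normed_vector) \<Rightarrow> bool" where
  "dictionary \<phi> \<longleftrightarrow> (\<forall>j. \<phi> j \<noteq> 0) \<and> closure (span (range \<phi>)) = UNIV"

definition propA1 :: "(nat \<Rightarrow> 'a::real_normed_vector) \<Rightarrow> nat \<Rightarrow> real \<Rightarrow> nat \<Rightarrow> bool" where
  "propA1 \<phi> N k D \<longleftrightarrow>
     (\<forall>(a::nat \<Rightarrow> real) A B. finite B \<and> A \<subseteq> B \<and> card A \<le> N \<and> card B < D \<longrightarrow>
        norm (\<Sum>j\<in>A. a j *\<^sub>R \<phi> j) \<le> k * norm (\<Sum>j\<in>B. a j *\<^sub>R \<phi> j))"

definition propA3 :: "(nat \<Rightarrow> 'a::real_normed_vector) \<Rightarrow> nat \<Rightarrow> (nat \<Rightarrow> real) \<Rightarrow> nat \<Rightarrow> bool" where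
  "propA3 \<phi> N H D \<longleftrightarrow>
     (\<forall>(a::nat \<Rightarrow> real) A B. finite B \<and> A \<subseteq> B \<and> card A \<le> N \<and> card B < D \<longrightarrow>
        (\<Sum>j\<in>A. \<bar>a j\<bar>) \<le> H (card A) * norm (\<Sum>j\<in>B. a j *\<^sub>R \<phi> j))"

end

theory Submission
  imports Defs
begin

text \<open>With \<open>N = 1\<close>, either hypothesis bounds the \<open>j\<close>-th coefficient of every finite
expansion \<open>\<Sum>i\<in>B. a i *\<^sub>R \<phi> i\<close> by \<open>C\<^sub>j\<close> times its norm. Hence the dictionary is
linearly independent, the \<open>j\<close>-th coordinate is a well-defined linear functional on the span,
bounded by \<open>C\<^sub>j\<close>, and it extends by uniform continuity from the dense span to the whole space.\<close>

definition coefficient_bounded :: "(nat \<Rightarrow> 'a::real_normed_vector) \<Rightarrow> nat \<Rightarrow> real \<Rightarrow> bool" where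
  "coefficient_bounded \<phi> j C \<longleftrightarrow>
     (\<forall>B a. finite B \<longrightarrow> j \<in> B \<longrightarrow> \<bar>a j\<bar> \<le> C * norm (\<Sum>i\<in>B. a i *\<^sub>R \<phi> i))"

lemma coefficient_boundedD:
  assumes "coefficient_bounded \<phi> j C" and "finite B" and "j \<in> B"
  shows "\<bar>a j\<bar> \<le> C * norm (\<Sum>i\<in>B. a i *\<^sub>R \<phi> i)"
  using assms unfolding coefficient_bounded_def by blast

lemma propA1_imp_coefficient_bounded:
  assumes A1: "\<forall>D. propA1 \<phi> N k D" and "1 \<le> N" and "\<phi> j \<noteq> 0"
  shows "coefficient_bounded \<phi> j (k / norm (\<phi> j))"
  unfolding coefficient_bounded_def
proof (intro allI impI)
  fix B and a :: "nat \<Rightarrow> real"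
  assume "finite B" "j \<in> B"
  with A1 \<open>1 \<le> N\<close> have "norm (\<Sum>i\<in>{j}. a i *\<^sub>R \<phi> i) \<le> k * norm (\<Sum>i\<in>B. a i *\<^sub>R \<phi> i)"
    unfolding propA1_def
    by (elim allE[of _ "Suc (card B)"] allE[of _ a] allE[of _ "{j}"] allE[of _ B]) auto
  then show "\<bar>a j\<bar> \<le> k / norm (\<phi> j) * norm (\<Sum>i\<in>B. a i *\<^sub>R \<phi> i)"
    using \<open>\<phi> j \<noteq> 0\<close> by (simp add: field_simps)
qed

lemma propA3_imp_coefficient_bounded:
  assumes A3: "\<forall>D. propA3 \<phi> N H D" and "1 \<le> N"
  shows "coefficient_bounded \<phi> j (H 1)"
  unfolding coefficient_bounded_def
proof (intro allI impI)
  fix B and a :: "nat \<Rightarrow> real"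
  assume "finite B" "j \<in> B"
  with A3 \<open>1 \<le> N\<close> have "(\<Sum>i\<in>{j}. \<bar>a i\<bar>) \<le> H (card {j}) * norm (\<Sum>i\<in>B. a i *\<^sub>R \<phi> i)"
    unfolding propA3_def
    by (elim allE[of _ "Suc (card B)"] allE[of _ a] allE[of _ "{j}"] allE[of _ B]) auto
  then show "\<bar>a j\<bar> \<le> H 1 * norm (\<Sum>i\<in>B. a i *\<^sub>R \<phi> i)"
    by simp
qed

lemma coefficient_bounded_pos:
  assumes "coefficient_bounded \<phi> j C"
  shows "0 < C"
proof -
  have "1 \<le> C * norm (\<phi> j)"
    using coefficient_boundedD[OF assms, of "{j}" "\<lambda>_. 1"] by simp
  then show ?thesis
    using mult_nonpos_nonneg[of C "norm (\<phi> j)"] by fastforce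
qed

lemma coefficient_bounded_eq_imp_eq:
  assumes "coefficient_bounded \<phi> j C" and "\<phi> i = \<phi> j"
  shows "i = j"
proof (rule ccontr)
  assume "i \<noteq> j"
  have "\<bar>(\<lambda>k. if k = j then 1 else -1) j\<bar>
      \<le> C * norm (\<Sum>k\<in>{i, j}. (if k = j then 1 else -1) *\<^sub>R \<phi> k)"
    by (rule coefficient_boundedD[OF assms(1)]) simp_all
  with \<open>i \<noteq> j\<close> \<open>\<phi> i = \<phi> j\<close> show False by simp
qed

lemma span_rangeE:
  assumes "x \<in> span (range \<phi>)"
  obtains B a where "finite B" "x = (\<Sum>i\<in>B. a i *\<^sub>R \<phi> i)"
proof -
  obtain t r where t: "finite t" "t \<subseteq> range \<phi>" "x = (\<Sum>v\<in>t. r v *\<^sub>R v)"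
    using assms unfolding span_explicit by blast
  then obtain B where B: "inj_on \<phi> B" "t = \<phi> ` B"
    by (meson subset_image_inj)
  show thesis
  proof
    show "finite B" using t(1) B by (simp add: finite_image_iff)
    show "x = (\<Sum>i\<in>B. r (\<phi> i) *\<^sub>R \<phi> i)" using t(3) B by (simp add: sum.reindex)
  qed
qed

lemma independent_range_if_coefficients_bounded:
  assumes bounded: "\<And>j. \<exists>C. coefficient_bounded \<phi> j C"
  shows "independent (range \<phi>)"
  unfolding independent_explicit_finite_subsets
proof (intro allI impI ballI)
  fix t u v
  assume t: "t \<subseteq> range \<phi>" "finite t" and zero: "(\<Sum>v\<in>t. u v *\<^sub>R v) = 0" and "v \<in> t"
  obtain B where B: "inj_on \<phi> B" "t = \<phi> ` B"
    using t(1) by (meson subset_image_inj)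
  then obtain j where "j \<in> B" "v = \<phi> j"
    using \<open>v \<in> t\<close> by blast
  obtain C where C: "coefficient_bounded \<phi> j C"
    using bounded by blast
  have "finite B"
    using t(2) B by (simp add: finite_image_iff)
  have "(\<Sum>i\<in>B. u (\<phi> i) *\<^sub>R \<phi> i) = 0"
    using zero B by (simp add: sum.reindex)
  then have "\<bar>u (\<phi> j)\<bar> \<le> 0"
    using coefficient_boundedD[OF C \<open>finite B\<close> \<open>j \<in> B\<close>, of "\<lambda>i. u (\<phi> i)"] by simp
  then show "u v = 0"
    using \<open>v = \<phi> j\<close> by simp
qed

lemma coordinate_functional_on_span:
  fixes \<phi> :: "nat \<Rightarrow> 'a::real_normed_vector"
  assumes bounded: "\<And>i. \<exists>C. coefficient_bounded \<phi> i C" and C: "coefficient_bounded \<phi> j C"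
  obtains f :: "'a \<Rightarrow> real" where "linear f" "\<And>i. f (\<phi> i) = (if i = j then 1 else 0)"
    "\<And>x. x \<in> span (range \<phi>) \<Longrightarrow> \<bar>f x\<bar> \<le> C * norm x"
proof -
  obtain f :: "'a \<Rightarrow> real"
    where f: "linear f" "\<And>x. x \<in> range \<phi> \<Longrightarrow> f x = (if x = \<phi> j then 1 else 0)"
    using linear_independent_extend[OF independent_range_if_coefficients_bounded[OF bounded],
        of "\<lambda>x. if x = \<phi> j then 1 else 0"]
    by blast
  have f_basis: "f (\<phi> i) = (if i = j then 1 else 0)" for i
    using f(2) coefficient_bounded_eq_imp_eq[OF C] by auto
  have "\<bar>f x\<bar> \<le> C * norm x" if x: "x \<in> span (range \<phi>)" for x
  proof -
    obtain B a where B: "finite B" "x = (\<Sum>i\<in>B. a i *\<^sub>R \<phi> i)"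
      using span_rangeE[OF x] .
    have "f x = (\<Sum>i\<in>B. a i * f (\<phi> i))"
      using B(2) by (simp add: linear_sum[OF f(1)] linear_scale[OF f(1)])
    also have "\<dots> = (if j \<in> B then a j else 0)"
      using B(1) by (simp add: f_basis if_distrib sum.delta cong: if_cong)
    finally show ?thesis
      using coefficient_boundedD[OF C B(1)] coefficient_bounded_pos[OF C] B(2) by auto
  qed
  with f(1) f_basis show thesis by (rule that)
qed

lemma bounded_linear_extension_from_dense_subspace:
  fixes f :: "'a::real_normed_vector \<Rightarrow> 'b::banach"
  assumes f: "linear f" and S: "subspace S" "closure S = UNIV"
    and C: "0 \<le> C" "\<And>x. x \<in> S \<Longrightarrow> norm (f x) \<le> C * norm x"
  obtains g where "bounded_linear g" "\<And>x. x \<in> S \<Longrightarrow> g x = f x"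
proof -
  have "C-lipschitz_on S f"
  proof (rule lipschitz_onI)
    fix x y assume "x \<in> S" "y \<in> S"
    then have "x - y \<in> S" using S(1) by (simp add: subspace_diff)
    then show "dist (f x) (f y) \<le> C * dist x y"
      using C(2) by (simp add: dist_norm linear_diff[OF f, symmetric])
  qed fact
  then obtain g where g_lip: "C-lipschitz_on UNIV g" and g_eq: "\<And>x. x \<in> S \<Longrightarrow> g x = f x"
    using lipschitz_extend_closure S(2) by metis
  have g_cont: "continuous_on UNIV g"
    using g_lip by (rule lipschitz_on_continuous_on)
  have add: "g (x + y) = g x + g y" for x y
  proof -
    define h where "h = (\<lambda>(x, y). g (x + y) - g x - g y)"
    have "continuous_on UNIV h"
      unfolding h_def split_beta
      by (intro continuous_on_diff continuous_on_compose2[OF g_cont] continuous_intros) auto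
    moreover have "h p = 0" if "p \<in> S \<times> S" for p
      using that g_eq subspace_add[OF S(1)] linear_add[OF f] by (auto simp: h_def)
    moreover have "closure (S \<times> S) = UNIV"
      by (simp add: closure_Times S(2))
    ultimately have "h (x, y) = 0"
      using continuous_constant_on_closure[of "S \<times> S" h 0 "(x, y)"] by simp
    then show ?thesis by (simp add: h_def algebra_simps)
  qed
  have scale: "g (c *\<^sub>R x) = c *\<^sub>R g x" for c x
  proof -
    have "continuous_on UNIV (\<lambda>x. g (c *\<^sub>R x) - c *\<^sub>R g x)"
      by (intro continuous_on_diff continuous_on_compose2[OF g_cont] continuous_intros) auto
    moreover have "g (c *\<^sub>R x) - c *\<^sub>R g x = 0" if "x \<in> S" for x
      using that g_eq subspace_scale[OF S(1)] linear_scale[OF f] by auto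
    ultimately have "g (c *\<^sub>R x) - c *\<^sub>R g x = 0"
      using continuous_constant_on_closure[of S "\<lambda>x. g (c *\<^sub>R x) - c *\<^sub>R g x" 0 x] S(2)
      by simp
    then show ?thesis by simp
  qed
  have "g 0 = 0"
    using g_eq[of 0] subspace_0[OF S(1)] linear_0[OF f] by simp
  then have "norm (g x) \<le> norm x * C" for x
    using lipschitz_onD[OF g_lip, of x 0] by (simp add: dist_norm mult.commute)
  then have "bounded_linear g"
    using add scale by (rule bounded_linear_intro[rotated 2])
  then show thesis using g_eq by (rule that)
qed

lemma biorthogonal_functional_exists:
  fixes \<phi> :: "nat \<Rightarrow> 'a::real_normed_vector"
  assumes dense: "closure (span (range \<phi>)) = UNIV"
    and bounded: "\<And>i. \<exists>C. coefficient_bounded \<phi> i C"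
  shows "\<exists>g :: 'a \<Rightarrow> real. bounded_linear g \<and> (\<forall>i. g (\<phi> i) = (if i = j then 1 else 0))"
proof -
  obtain C where C: "coefficient_bounded \<phi> j C"
    using bounded by blast
  obtain f where f: "linear f" "\<And>i. f (\<phi> i) = (if i = j then 1 else 0)"
    "\<And>x. x \<in> span (range \<phi>) \<Longrightarrow> \<bar>f x\<bar> \<le> C * norm x"
    using coordinate_functional_on_span[OF bounded C] by blast
  obtain g where g: "bounded_linear g" "\<And>x. x \<in> span (range \<phi>) \<Longrightarrow> g x = f x"
    by (rule bounded_linear_extension_from_dense_subspace[OF f(1) subspace_span dense, of C])
      (use coefficient_bounded_pos[OF C] f(3) in auto)
  have "g (\<phi> i) = (if i = j then 1 else 0)" for i
    using g(2)[OF span_base[OF rangeI]] f(2) by simp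
  with g(1) show ?thesis
    by blast
qed

theorem lemma2p2:
  fixes \<phi> :: "nat \<Rightarrow> 'a::banach"
  assumes "dictionary \<phi>"
    and "(\<exists>k1>0. \<forall>D. propA1 \<phi> 1 k1 D) \<or>
         (\<exists>H::nat \<Rightarrow> real. (\<forall>n. H n > 0) \<and> mono H \<and> (\<forall>D. propA3 \<phi> 1 H D))"
  shows "\<exists>\<phi>s :: nat \<Rightarrow> 'a \<Rightarrow> real. (\<forall>j. bounded_linear (\<phi>s j)) \<and>
           (\<forall>i j. \<phi>s j (\<phi> i) = (if i = j then 1 else 0))"
proof -
  have nonzero: "\<phi> j \<noteq> 0" for j
    using assms(1) unfolding dictionary_def by blast
  have dense: "closure (span (range \<phi>)) = UNIV"
    using assms(1) unfolding dictionary_def by blast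
  have bounded: "\<exists>C. coefficient_bounded \<phi> j C" for j
    using assms(2)
  proof
    assume "\<exists>k1>0. \<forall>D. propA1 \<phi> 1 k1 D"
    then obtain k where "\<forall>D. propA1 \<phi> 1 k D"
      by blast
    then show ?thesis
      using propA1_imp_coefficient_bounded[of \<phi> 1 k j] nonzero by blast
  next
    \<comment> \<open>only \<open>H 1\<close> enters\<close>
    assume "\<exists>H::nat \<Rightarrow> real. (\<forall>n. H n > 0) \<and> mono H \<and> (\<forall>D. propA3 \<phi> 1 H D)"
    then show ?thesis
      using propA3_imp_coefficient_bounded by blast
  qed
  have "\<exists>g :: 'a \<Rightarrow> real. bounded_linear g \<and> (\<forall>i. g (\<phi> i) = (if i = j then 1 else 0))"
    for j
    using biorthogonal_functional_exists[OF dense bounded] .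
  then show ?thesis
    using choice[of "\<lambda>j g. bounded_linear g \<and> (\<forall>i. g (\<phi> i) = (if i = j then 1 else 0))"]
    by blast
qed

end
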